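(* The matrices $A=\begin{pmatrix}1&2&1\\1&1&0\\1&0&1\end{pmatrix}$ and $B=\begin{pmatrix}1&0&1&0&1\\0&1&1&1&0\\1&1&1&0&0\\1&0&0&0&1\\0&1&0&1&0\end{pmatrix}$ are balanced strong shift equivalent (in particular strong shift equivalent and unitally shift equivalent).
   Context: A rectangular $\{0,1\}$-matrix $D$ is a division matrix if every row contains at least one $1$ and every column contains exactly one $1$. For square $\mathbb{N}$-matrices $A,B$ with no zero rows, $B$ is an outsplit of $A$ if there are a division matrix $D$ and an $\mathbb{N}$-matrix $E$ with $A=DE$ and $B=ED$. $A$ and $B$ are balanced elementary strong shift equivalent if there are a division matrix $D$ and rectangular $\mathbb{N}$-matrices $R_A,R_B$ with $A=D^tR_A$, $B=D^tR_B$ and $R_AD^t=R_BD^t$. Balanced strong shift equivalence is the equivalence relation generated by balanced elementary strong shift equivalence and outsplits. Two square $\mathbb{N}$-matrices are unitally shift equivalent if there are $\ell\ge1$ and rectangular $\mathbb{N}$-matrices $R,S$ with $A^\ell=RS$, $B^\ell=SR$, $AR=RB$, $BS=SA$, and $m,k\in\mathbb{N}$ with $(B^t)^mR^t\underline1=(B^t)^{m+k}\underline1$ ($\underline1$ the all-ones column vector). *)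

theory Defs
  imports "Jordan_Normal_Form.Matrix"
begin

definition division_matrix :: "nat mat \<Rightarrow> bool" where
  "division_matrix D \<longleftrightarrow>
     (\<forall>i<dim_row D. \<forall>j<dim_col D. D $$ (i,j) \<in> {0,1}) \<and>
     (\<forall>i<dim_row D. \<exists>j<dim_col D. D $$ (i,j) = 1) \<and>
     (\<forall>j<dim_col D. \<exists>!i. i < dim_row D \<and> D $$ (i,j) = 1)"

definition no_zero_rows :: "nat mat \<Rightarrow> bool" where
  "no_zero_rows A \<longleftrightarrow> (\<forall>i<dim_row A. \<exists>j<dim_col A. A $$ (i,j) \<noteq> 0)"

definition sq_nzr :: "nat mat \<Rightarrow> bool" where
  "sq_nzr A \<longleftrightarrow> square_mat A \<and> no_zero_rows A"

definition outsplit :: "nat mat \<Rightarrow> nat mat \<Rightarrow> bool" where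
  "outsplit A B \<longleftrightarrow> sq_nzr A \<and> sq_nzr B \<and>
     (\<exists>D E. D \<in> carrier_mat (dim_row A) (dim_row B) \<and>
            E \<in> carrier_mat (dim_row B) (dim_row A) \<and>
            division_matrix D \<and> A = D * E \<and> B = E * D)"

definition balanced_elem_sse :: "nat mat \<Rightarrow> nat mat \<Rightarrow> bool" where
  "balanced_elem_sse A B \<longleftrightarrow> sq_nzr A \<and> sq_nzr B \<and>
     (\<exists>D RA RB. dim_col D = dim_row A \<and>
        RA \<in> carrier_mat (dim_row D) (dim_row A) \<and>
        RB \<in> carrier_mat (dim_row D) (dim_row A) \<and>
        division_matrix D \<and>
        A = transpose_mat D * RA \<and> B = transpose_mat D * RB \<and>
        RA * transpose_mat D = RB * transpose_mat D)"

definition balanced_sse :: "nat mat \<Rightarrow> nat mat \<Rightarrow> bool" where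
  "balanced_sse = equivclp (\<lambda>A B. balanced_elem_sse A B \<or> outsplit A B)"

definition elem_sse :: "nat mat \<Rightarrow> nat mat \<Rightarrow> bool" where
  "elem_sse A B \<longleftrightarrow> square_mat A \<and> square_mat B \<and>
     (\<exists>R S. R \<in> carrier_mat (dim_row A) (dim_row B) \<and>
            S \<in> carrier_mat (dim_row B) (dim_row A) \<and>
            A = R * S \<and> B = S * R)"

definition sse :: "nat mat \<Rightarrow> nat mat \<Rightarrow> bool" where
  "sse = equivclp elem_sse"

definition ones_vec :: "nat \<Rightarrow> nat vec" where
  "ones_vec n = vec n (\<lambda>_. 1)"

definition unital_se :: "nat mat \<Rightarrow> nat mat \<Rightarrow> bool" where
  "unital_se A B \<longleftrightarrow> square_mat A \<and> square_mat B \<and>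
     (\<exists>l R S m k. l \<ge> 1 \<and>
        R \<in> carrier_mat (dim_row A) (dim_row B) \<and>
        S \<in> carrier_mat (dim_row B) (dim_row A) \<and>
        A ^\<^sub>m l = R * S \<and> B ^\<^sub>m l = S * R \<and>
        A * R = R * B \<and> B * S = S * A \<and>
        (transpose_mat B ^\<^sub>m m) *\<^sub>v (transpose_mat R *\<^sub>v ones_vec (dim_row A)) =
        (transpose_mat B ^\<^sub>m (m + k)) *\<^sub>v ones_vec (dim_row B))"

definition matA :: "nat mat" where
  "matA = mat_of_rows_list 3 [[1,2,1],[1,1,0],[1,0,1]]"

definition matB :: "nat mat" where
  "matB = mat_of_rows_list 5
     [[1,0,1,0,1],[0,1,1,1,0],[1,1,1,0,0],[1,0,0,0,1],[0,1,0,1,0]]"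

end

theory Submission
  imports Defs
begin

(* A is carried to B by the chain  A -> A1 -> A2 ~ B1 <- B  of two outsplits of A, one balanced
   elementary strong shift equivalence and an outsplit of B.  Every outsplit and every balanced
   elementary step is a composite of elementary strong shift equivalences, which gives the strong
   shift equivalence.  Composing the five elementary equivalences along the chain yields a shift
   equivalence of lag 5 whose matrix R satisfies R^t 1 = (B^t)^2 1, so it is unital. *)

lemma elem_sse_mult:
  assumes "R \<in> carrier_mat n m" and "S \<in> carrier_mat m n"
  shows "elem_sse (R * S) (S * R)"
  using assms unfolding elem_sse_def by (auto simp: square_mat.simps)

lemma elem_sse_if_outsplit: "outsplit A B \<Longrightarrow> elem_sse A B"
  unfolding outsplit_def using elem_sse_mult by blast

lemma sse_if_balanced_elem_sse:
  assumes "balanced_elem_sse A B"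
  shows "sse A B"
proof -
  obtain D RA RB where "dim_col D = dim_row A"
    and RA: "RA \<in> carrier_mat (dim_row D) (dim_row A)"
    and RB: "RB \<in> carrier_mat (dim_row D) (dim_row A)"
    and A: "A = transpose_mat D * RA" and B: "B = transpose_mat D * RB"
    and X: "RA * transpose_mat D = RB * transpose_mat D"
    using assms unfolding balanced_elem_sse_def by blast
  then have Dt: "transpose_mat D \<in> carrier_mat (dim_row A) (dim_row D)" by simp
  have "elem_sse A (RA * transpose_mat D)"
    unfolding A by (rule elem_sse_mult[OF Dt RA])
  moreover have "elem_sse (RA * transpose_mat D) B"
    unfolding X B by (rule elem_sse_mult[OF RB Dt])
  ultimately show ?thesis unfolding sse_def by (meson equivclp_trans r_into_equivclp)
qed

lemma sse_if_balanced_sse: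
  assumes "balanced_sse A B"
  shows "sse A B"
  using assms unfolding balanced_sse_def
proof (induction rule: equivclp_induct)
  case base
  show ?case by (simp add: sse_def)
next
  case (step B C)
  have "sse B C \<or> sse C B"
    using step(2) sse_if_balanced_elem_sse elem_sse_if_outsplit unfolding sse_def by blast
  then show ?case using step(3) unfolding sse_def by (meson equivclp_sym equivclp_trans)
qed

lemma outsplitI:
  assumes "A = D * E" "B = E * D" "sq_nzr A" "sq_nzr B"
    and "D \<in> carrier_mat n m" "E \<in> carrier_mat m n" "division_matrix D"
  shows "outsplit A B"
  using assms unfolding outsplit_def by auto

lemma balanced_elem_sseI:
  assumes "A = transpose_mat D * RA" "B = transpose_mat D * RB"
    and "RA * transpose_mat D = RB * transpose_mat D" "sq_nzr A" "sq_nzr B"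
    and "D \<in> carrier_mat k n" "RA \<in> carrier_mat k n" "RB \<in> carrier_mat k n" "division_matrix D"
  shows "balanced_elem_sse A B"
  using assms unfolding balanced_elem_sse_def by auto

lemma balanced_sse_if_outsplit: "outsplit A B \<Longrightarrow> balanced_sse A B"
  unfolding balanced_sse_def by blast

lemma balanced_sse_if_balanced_elem_sse: "balanced_elem_sse A B \<Longrightarrow> balanced_sse A B"
  unfolding balanced_sse_def by blast

lemma balanced_sse_sym: "balanced_sse A B \<Longrightarrow> balanced_sse B A"
  unfolding balanced_sse_def by (rule equivclp_sym)

lemma balanced_sse_trans [trans]: "balanced_sse A B \<Longrightarrow> balanced_sse B C \<Longrightarrow> balanced_sse A C"
  unfolding balanced_sse_def by (rule equivclp_trans)

definition shift_equiv_via :: "nat \<Rightarrow> 'a :: semiring_1 mat \<Rightarrow> 'a mat \<Rightarrow> 'a mat \<Rightarrow> 'a mat \<Rightarrow> bool" where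
  "shift_equiv_via l R S A B \<longleftrightarrow> square_mat A \<and> square_mat B \<and>
     R \<in> carrier_mat (dim_row A) (dim_row B) \<and> S \<in> carrier_mat (dim_row B) (dim_row A) \<and>
     A ^\<^sub>m l = R * S \<and> B ^\<^sub>m l = S * R \<and> A * R = R * B \<and> B * S = S * A"

lemma pow_mat_add:
  assumes "A \<in> carrier_mat n n"
  shows "A ^\<^sub>m (a + b) = A ^\<^sub>m a * A ^\<^sub>m b"
proof (induction b)
  case (Suc b)
  then have "A ^\<^sub>m (a + Suc b) = A ^\<^sub>m a * A ^\<^sub>m b * A" by simp
  also have "\<dots> = A ^\<^sub>m a * A ^\<^sub>m Suc b"
    by (simp add: assoc_mult_mat[of _ n n _ n _ n] assms)
  finally show ?case .
qed (use assms in simp)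

lemma pow_mat_intertwine:
  assumes A: "A \<in> carrier_mat n n" and B: "B \<in> carrier_mat m m" and R: "R \<in> carrier_mat n m"
    and AR: "A * R = R * B"
  shows "A ^\<^sub>m k * R = R * B ^\<^sub>m k"
proof (induction k)
  case 0
  then show ?case using A B R by simp
next
  case (Suc k)
  have "A ^\<^sub>m Suc k * R = A ^\<^sub>m k * (A * R)" using A R by (simp add: assoc_mult_mat[of _ n n _ n _ m])
  also have "\<dots> = (A ^\<^sub>m k * R) * B" using A B R AR by (simp add: assoc_mult_mat[of _ n n _ m _ m])
  also have "\<dots> = R * B ^\<^sub>m Suc k" using Suc B R by (simp add: assoc_mult_mat[of _ n m _ m _ m])
  finally show ?case .
qed

lemma shift_equiv_via_elementary:
  assumes "A = R * S" "B = S * R" "R \<in> carrier_mat n m" "S \<in> carrier_mat m n"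
  shows "shift_equiv_via 1 R S A B"
  using assms unfolding shift_equiv_via_def by (simp add: square_mat.simps)

lemma shift_equiv_via_trans:
  assumes AB: "shift_equiv_via l R S A B" and BC: "shift_equiv_via l' R' S' B C"
  shows "shift_equiv_via (l + l') (R * R') (S' * S) A C"
proof -
  define n m p where "n = dim_row A" and "m = dim_row B" and "p = dim_row C"
  have A: "A \<in> carrier_mat n n" and B: "B \<in> carrier_mat m m" and C: "C \<in> carrier_mat p p"
    and R: "R \<in> carrier_mat n m" and S: "S \<in> carrier_mat m n"
    and R': "R' \<in> carrier_mat m p" and S': "S' \<in> carrier_mat p m"
    using AB BC unfolding shift_equiv_via_def n_def m_def p_def by (auto simp: square_mat.simps)
  have AR: "A * R = R * B" and BS: "B * S = S * A" and RS: "A ^\<^sub>m l = R * S"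
    and SR: "B ^\<^sub>m l = S * R"
    using AB unfolding shift_equiv_via_def by simp_all
  have BR': "B * R' = R' * C" and CS': "C * S' = S' * B" and R'S': "B ^\<^sub>m l' = R' * S'"
    and S'R': "C ^\<^sub>m l' = S' * R'"
    using BC unfolding shift_equiv_via_def by simp_all
  have "A ^\<^sub>m (l + l') = A ^\<^sub>m l' * (R * S)"
    using RS pow_mat_add[OF A, of l' l] by (simp add: add.commute)
  also have "\<dots> = (A ^\<^sub>m l' * R) * S"
    by (simp only: assoc_mult_mat[OF pow_carrier_mat[OF A] R S])
  also have "\<dots> = R * (R' * S') * S"
    by (simp only: pow_mat_intertwine[OF A B R AR] R'S')
  also have "\<dots> = (R * R') * (S' * S)"
    by (simp only: assoc_mult_mat[OF R mult_carrier_mat[OF R' S'] S] assoc_mult_mat[OF R' S' S]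
        assoc_mult_mat[OF R R' mult_carrier_mat[OF S' S]])
  finally have pow_A: "A ^\<^sub>m (l + l') = (R * R') * (S' * S)" .
  have "C ^\<^sub>m (l + l') = C ^\<^sub>m l * (S' * R')"
    using S'R' by (simp add: pow_mat_add[OF C])
  also have "\<dots> = (C ^\<^sub>m l * S') * R'"
    by (simp only: assoc_mult_mat[OF pow_carrier_mat[OF C] S' R'])
  also have "\<dots> = S' * (S * R) * R'"
    by (simp only: pow_mat_intertwine[OF C B S' CS'] SR)
  also have "\<dots> = (S' * S) * (R * R')"
    by (simp only: assoc_mult_mat[OF S' mult_carrier_mat[OF S R] R'] assoc_mult_mat[OF S R R']
        assoc_mult_mat[OF S' S mult_carrier_mat[OF R R']])
  finally have pow_C: "C ^\<^sub>m (l + l') = (S' * S) * (R * R')" .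
  have "A * (R * R') = (R * B) * R'"
    by (simp only: assoc_mult_mat[OF A R R', symmetric] AR)
  also have "\<dots> = (R * R') * C"
    by (simp only: assoc_mult_mat[OF R B R'] BR' assoc_mult_mat[OF R R' C])
  finally have "A * (R * R') = (R * R') * C" .
  moreover have "C * (S' * S) = (S' * B) * S"
    by (simp only: assoc_mult_mat[OF C S' S, symmetric] CS')
  then have "C * (S' * S) = (S' * S) * A"
    by (simp only: assoc_mult_mat[OF S' B S] BS assoc_mult_mat[OF S' S A])
  ultimately show ?thesis
    using pow_A pow_C mult_carrier_mat[OF R R'] mult_carrier_mat[OF S' S] AB BC
    unfolding shift_equiv_via_def n_def p_def by blast
qed

lemma unital_se_if_shift_equiv_via:
  assumes se: "shift_equiv_via l R S A B" and "1 \<le> l"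
    and ones: "transpose_mat R *\<^sub>v ones_vec (dim_row A) = (transpose_mat B ^\<^sub>m k) *\<^sub>v ones_vec (dim_row B)"
  shows "unital_se A B"
proof -
  have sq: "square_mat A" "square_mat B" and "dim_col R = dim_row B"
    and se': "R \<in> carrier_mat (dim_row A) (dim_row B) \<and> S \<in> carrier_mat (dim_row B) (dim_row A) \<and>
      A ^\<^sub>m l = R * S \<and> B ^\<^sub>m l = S * R \<and> A * R = R * B \<and> B * S = S * A"
    using se unfolding shift_equiv_via_def by auto
  then have "transpose_mat R *\<^sub>v ones_vec (dim_row A) \<in> carrier_vec (dim_col B)"
    using sq(2) unfolding carrier_vec_def square_mat.simps by simp
  then have unital: "(transpose_mat B ^\<^sub>m 0) *\<^sub>v (transpose_mat R *\<^sub>v ones_vec (dim_row A)) =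
      (transpose_mat B ^\<^sub>m (0 + k)) *\<^sub>v ones_vec (dim_row B)"
    using ones by simp
  show ?thesis
    unfolding unital_se_def using sq \<open>1 \<le> l\<close> se' unital by blast
qed

lemma mat_eq_code:
  "A = B \<longleftrightarrow> dim_row A = dim_row B \<and> dim_col A = dim_col B \<and> mat_to_list A = mat_to_list B"
proof
  assume eq: "dim_row A = dim_row B \<and> dim_col A = dim_col B \<and> mat_to_list A = mat_to_list B"
  show "A = B"
  proof (rule eq_matI)
    fix i j assume "i < dim_row B" "j < dim_col B"
    then show "A $$ (i, j) = B $$ (i, j)"
      using eq arg_cong[OF conjunct2[OF conjunct2[OF eq]], of "\<lambda>xs. xs ! i ! j"]
      by (simp add: mat_to_list_def)
  qed (use eq in auto)
qed simp

lemma vec_eq_code: "v = w \<longleftrightarrow> list_of_vec v = list_of_vec w"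
  by (metis vec_list)

lemma division_matrix_code:
  "division_matrix D \<longleftrightarrow>
     (\<forall>i\<in>set [0..<dim_row D]. \<forall>j\<in>set [0..<dim_col D]. D $$ (i,j) = 0 \<or> D $$ (i,j) = 1) \<and>
     (\<forall>i\<in>set [0..<dim_row D]. \<exists>j\<in>set [0..<dim_col D]. D $$ (i,j) = 1) \<and>
     (\<forall>j\<in>set [0..<dim_col D]. \<exists>i\<in>set [0..<dim_row D]. D $$ (i,j) = 1 \<and>
         (\<forall>i'\<in>set [0..<dim_row D]. D $$ (i',j) = 1 \<longrightarrow> i' = i))"
  unfolding division_matrix_def
  by (simp add: Ex1_def atLeast0LessThan lessThan_iff Ball_def Bex_def imp_conjL)

lemma sq_nzr_code:
  "sq_nzr A \<longleftrightarrow> dim_col A = dim_row A \<and>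
     (\<forall>i\<in>set [0..<dim_row A]. \<exists>j\<in>set [0..<dim_col A]. A $$ (i,j) \<noteq> 0)"
  unfolding sq_nzr_def no_zero_rows_def by (auto simp: square_mat.simps atLeast0LessThan)

definition matA1 :: "nat mat" where
  "matA1 = mat_of_rows_list 4 [[0,0,1,0], [1,1,1,1], [1,1,1,0], [1,1,0,1]]"

definition matA2 :: "nat mat" where
  "matA2 = mat_of_rows_list 6
     [[1,0,0,1,0,1], [0,0,0,1,0,0], [0,1,1,0,1,0], [1,1,0,1,0,1], [1,0,0,0,0,1], [0,1,1,0,1,0]]"

definition matB1 :: "nat mat" where
  "matB1 = mat_of_rows_list 6
     [[1,0,0,1,0,1], [0,0,0,1,0,0], [0,1,1,0,1,0], [1,1,1,1,0,0], [1,0,0,0,0,1], [0,1,1,0,1,0]]"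

definition D_A1 :: "nat mat" where
  "D_A1 = mat_of_rows_list 4 [[1,1,0,0], [0,0,1,0], [0,0,0,1]]"

definition E_A1 :: "nat mat" where
  "E_A1 = mat_of_rows_list 3 [[0,1,0], [1,1,1], [1,1,0], [1,0,1]]"

definition D_A2 :: "nat mat" where
  "D_A2 = mat_of_rows_list 6 [[0,1,0,0,0,0], [1,0,0,0,0,1], [0,0,0,1,0,0], [0,0,1,0,1,0]]"

definition E_A2 :: "nat mat" where
  "E_A2 = mat_of_rows_list 4 [[0,1,1,0], [0,0,1,0], [1,0,0,1], [1,1,1,0], [0,1,0,0], [1,0,0,1]]"

definition D_bal :: "nat mat" where
  "D_bal = mat_of_rows_list 6
     [[1,0,0,0,0,0], [0,1,0,0,0,0], [0,0,0,1,0,0], [0,0,0,0,1,0], [0,0,1,0,0,1]]"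

definition R_A2 :: "nat mat" where
  "R_A2 = mat_of_rows_list 6
     [[1,0,0,1,0,1], [0,0,0,1,0,0], [1,1,0,1,0,1], [1,0,0,0,0,1], [0,1,1,0,1,0]]"

definition R_B1 :: "nat mat" where
  "R_B1 = mat_of_rows_list 6
     [[1,0,0,1,0,1], [0,0,0,1,0,0], [1,1,1,1,0,0], [1,0,0,0,0,1], [0,1,1,0,1,0]]"

definition D_B1 :: "nat mat" where
  "D_B1 = mat_of_rows_list 6
     [[1,0,0,0,0,0], [0,1,1,0,0,0], [0,0,0,1,0,0], [0,0,0,0,1,0], [0,0,0,0,0,1]]"

definition E_B1 :: "nat mat" where
  "E_B1 = mat_of_rows_list 5
     [[1,0,1,0,1], [0,0,1,0,0], [0,1,0,1,0], [1,1,1,0,0], [1,0,0,0,1], [0,1,0,1,0]]"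

lemmas chain_mat_defs = matA_def matB_def matA1_def matA2_def matB1_def D_A1_def E_A1_def
  D_A2_def E_A2_def D_bal_def R_A2_def R_B1_def D_B1_def E_B1_def

lemma chain_carriers:
  "D_A1 \<in> carrier_mat 3 4" "E_A1 \<in> carrier_mat 4 3"
  "D_A2 \<in> carrier_mat 4 6" "E_A2 \<in> carrier_mat 6 4"
  "D_bal \<in> carrier_mat 5 6" "R_A2 \<in> carrier_mat 5 6" "R_B1 \<in> carrier_mat 5 6"
  "D_B1 \<in> carrier_mat 5 6" "E_B1 \<in> carrier_mat 6 5"
  by (unfold chain_mat_defs carrier_mat_def mem_Collect_eq; code_simp)+

lemma chain_factorizations:
  "matA = D_A1 * E_A1" "matA1 = E_A1 * D_A1"
  "matA1 = D_A2 * E_A2" "matA2 = E_A2 * D_A2"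
  "matA2 = transpose_mat D_bal * R_A2" "matB1 = transpose_mat D_bal * R_B1"
  "R_A2 * transpose_mat D_bal = R_B1 * transpose_mat D_bal"
  "matB = D_B1 * E_B1" "matB1 = E_B1 * D_B1"
  by (unfold chain_mat_defs mat_eq_code; code_simp)+

lemma chain_sq_nzr: "sq_nzr matA" "sq_nzr matA1" "sq_nzr matA2" "sq_nzr matB1" "sq_nzr matB"
  by (unfold chain_mat_defs sq_nzr_code; code_simp)+

lemma chain_division_matrices:
  "division_matrix D_A1" "division_matrix D_A2" "division_matrix D_bal" "division_matrix D_B1"
  by (unfold chain_mat_defs division_matrix_code; code_simp)+

lemma balanced_sse_matA_matB: "balanced_sse matA matB"
proof -
  note F = chain_factorizations and N = chain_sq_nzr and C = chain_carriers
    and D = chain_division_matrices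
  have "balanced_sse matA matA1"
    by (rule balanced_sse_if_outsplit[OF outsplitI[OF F(1,2) N(1,2) C(1,2) D(1)]])
  also have "balanced_sse matA1 matA2"
    by (rule balanced_sse_if_outsplit[OF outsplitI[OF F(3,4) N(2,3) C(3,4) D(2)]])
  also have "balanced_sse matA2 matB1"
    by (rule balanced_sse_if_balanced_elem_sse[OF balanced_elem_sseI[OF F(5,6,7) N(3,4) C(5,6,7) D(3)]])
  also have "balanced_sse matB1 matB"
    by (rule balanced_sse_sym[OF balanced_sse_if_outsplit[OF outsplitI[OF F(8,9) N(5,4) C(8,9) D(4)]]])
  finally show ?thesis .
qed

lemma unital_se_matA_matB: "unital_se matA matB"
proof -
  note F = chain_factorizations and C = chain_carriers
  define Dt where "Dt = transpose_mat D_bal"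
  have Dt: "Dt \<in> carrier_mat 6 5" using C(5) unfolding Dt_def by simp
  have "shift_equiv_via 1 D_A1 E_A1 matA matA1"
    by (rule shift_equiv_via_elementary[OF F(1,2) C(1,2)])
  moreover have "shift_equiv_via 1 D_A2 E_A2 matA1 matA2"
    by (rule shift_equiv_via_elementary[OF F(3,4) C(3,4)])
  moreover have "shift_equiv_via 1 Dt R_A2 matA2 (R_A2 * Dt)"
    by (rule shift_equiv_via_elementary[OF F(5)[folded Dt_def] refl Dt C(6)])
  moreover have "shift_equiv_via 1 R_B1 Dt (R_A2 * Dt) matB1"
    by (rule shift_equiv_via_elementary[OF F(7)[folded Dt_def] F(6)[folded Dt_def] C(7) Dt])
  moreover have "shift_equiv_via 1 E_B1 D_B1 matB1 matB"
    by (rule shift_equiv_via_elementary[OF F(9,8) C(9,8)])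
  ultimately have se: "shift_equiv_via (1 + 1 + 1 + 1 + 1) (D_A1 * D_A2 * Dt * R_B1 * E_B1)
      (D_B1 * (Dt * (R_A2 * (E_A2 * E_A1)))) matA matB"
    by (meson shift_equiv_via_trans)
  (* evaluating the five-fold product at once is slow, so a prefix is evaluated first *)
  have R1: "D_A1 * D_A2 * Dt = mat_of_rows_list 5 [[1,1,0,0,1], [0,0,1,0,0], [0,0,0,1,1]]"
    unfolding Dt_def chain_mat_defs mat_eq_code by code_simp
  have R: "D_A1 * D_A2 * Dt * R_B1 * E_B1 =
      mat_of_rows_list 5 [[4,4,4,2,2], [2,2,3,1,1], [2,2,2,2,2]]"
    unfolding R1 unfolding chain_mat_defs mat_eq_code by code_simp
  have ones: "transpose_mat (D_A1 * D_A2 * Dt * R_B1 * E_B1) *\<^sub>v ones_vec (dim_row matA) =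
      (transpose_mat matB ^\<^sub>m 2) *\<^sub>v ones_vec (dim_row matB)"
    unfolding R unfolding chain_mat_defs ones_vec_def vec_eq_code by code_simp
  show ?thesis
    by (rule unital_se_if_shift_equiv_via[OF se _ ones]) simp
qed

theorem mainTheorem12:
  shows "balanced_sse matA matB \<and> sse matA matB \<and> unital_se matA matB"
  using balanced_sse_matA_matB sse_if_balanced_sse[OF balanced_sse_matA_matB] unital_se_matA_matB
  by blast

end
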